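(* Let $K$ be an alphabet space and $\sigma:K\to K^+$ a primitive generalized substitution. For every $\mathbf z\in X_\sigma$ and every $k\in\mathbb N$, the sequence $\mathbf z$ is a concatenation of $\sigma^k$-words, and $\mathbf z=S^i\sigma^k(\mathbf y)$ for some $i\ge0$ and some $\mathbf y\in X_\sigma$.
   Context: An alphabet space is a compact zero-dimensional metric space $K$ with at least two points; $K^+$ the nonempty finite words. A generalized substitution is a map $\sigma:K\to K^+$ with $a\mapsto|\sigma(a)|$ continuous and, for each $j$, $a\mapsto$ ($j$-th letter of $\sigma(a)$) continuous on $\{a:|\sigma(a)|\ge j\}$; it is extended to words by concatenation (and iterated) and to $K^{\mathbb Z}$ by concatenating the images with the image of $x_0$ starting at coordinate $0$. $\sigma$ is primitive if for every nonempty open $V\subset K$ there is $j$ such that for all $a$ and $k\ge j$ some letter of $\sigma^k(a)$ is in $V$. $\mathcal L(\sigma)$ is the set of words that are subwords of some $\sigma^j(a)$ or limits in $K^n$ of such words; $X_\sigma=\{\mathbf y\in K^{\mathbb Z}:\mathbf y[-n,n]\in\mathcal L(\sigma)\ \forall n\ge0\}$; $S$ is the shift $S(\mathbf y)_i=y_{i+1}$. A $\sigma^k$-word is a word $\sigma^k(a)$, $a\in K$; $\mathbf z$ is a concatenation of $\sigma^k$-words if there is a strictly increasing bi-infinite sequence of integers $(m_l)_{l\in\mathbb Z}$ with each $\mathbf z[m_l,m_{l+1}-1]$ a $\sigma^k$-word. *)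

theory Defs
  imports "HOL-Analysis.Analysis" "HOL-Library.Sublist"
begin

definition alphabet_space :: "'a::metric_space set \<Rightarrow> bool" where
  "alphabet_space K \<longleftrightarrow> compact K \<and> (top_of_set K dim_le 0) \<and> (\<exists>a\<in>K. \<exists>b\<in>K. a \<noteq> b)"

definition gen_subst :: "'a::metric_space set \<Rightarrow> ('a \<Rightarrow> 'a list) \<Rightarrow> bool" where
  "gen_subst K \<sigma> \<longleftrightarrow>
     (\<forall>a\<in>K. \<sigma> a \<noteq> [] \<and> set (\<sigma> a) \<subseteq> K) \<and>
     continuous_on K (\<lambda>a. length (\<sigma> a)) \<and>
     (\<forall>j. continuous_on {a\<in>K. j < length (\<sigma> a)} (\<lambda>a. \<sigma> a ! j))"

definition subst_word :: "('a \<Rightarrow> 'a list) \<Rightarrow> 'a list \<Rightarrow> 'a list" where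
  "subst_word \<sigma> w = concat (map \<sigma> w)"

definition subst_pow :: "('a \<Rightarrow> 'a list) \<Rightarrow> nat \<Rightarrow> 'a \<Rightarrow> 'a list" where
  "subst_pow \<sigma> k a = (subst_word \<sigma> ^^ k) [a]"

definition primitive :: "'a::metric_space set \<Rightarrow> ('a \<Rightarrow> 'a list) \<Rightarrow> bool" where
  "primitive K \<sigma> \<longleftrightarrow>
     (\<forall>V. openin (top_of_set K) V \<and> V \<noteq> {} \<longrightarrow>
        (\<exists>j. \<forall>a\<in>K. \<forall>k\<ge>j. \<exists>b\<in>set (subst_pow \<sigma> k a). b \<in> V))"

definition subst_factor :: "'a set \<Rightarrow> ('a \<Rightarrow> 'a list) \<Rightarrow> 'a list \<Rightarrow> bool" where
  "subst_factor K \<sigma> w \<longleftrightarrow> (\<exists>j. \<exists>a\<in>K. sublist w (subst_pow \<sigma> j a))"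

definition lang :: "'a::metric_space set \<Rightarrow> ('a \<Rightarrow> 'a list) \<Rightarrow> 'a list set" where
  "lang K \<sigma> = {w. set w \<subseteq> K \<and>
     (subst_factor K \<sigma> w \<or>
      (\<exists>ws :: nat \<Rightarrow> 'a list. (\<forall>m. subst_factor K \<sigma> (ws m) \<and> length (ws m) = length w) \<and>
          (\<forall>i<length w. (\<lambda>m. ws m ! i) \<longlonglongrightarrow> w ! i)))}"

definition window :: "(int \<Rightarrow> 'a) \<Rightarrow> int \<Rightarrow> int \<Rightarrow> 'a list" where
  "window y a b = map y [a..b]"

definition subshift :: "'a::metric_space set \<Rightarrow> ('a \<Rightarrow> 'a list) \<Rightarrow> (int \<Rightarrow> 'a) set" where
  "subshift K \<sigma> = {y. \<forall>n::nat. window y (- int n) (int n) \<in> lang K \<sigma>}"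

definition shift :: "(int \<Rightarrow> 'a) \<Rightarrow> int \<Rightarrow> 'a" where
  "shift y = (\<lambda>i. y (i + 1))"

text \<open>Extension of a letter-to-word map \<tau> to bi-infinite sequences: the image of y_0 starts at
  coordinate 0.  block_start gives the position where \<tau>(y_m) starts.\<close>
definition block_start :: "('a \<Rightarrow> 'a list) \<Rightarrow> (int \<Rightarrow> 'a) \<Rightarrow> int \<Rightarrow> int" where
  "block_start \<tau> y m =
     (if 0 \<le> m then (\<Sum>l\<in>{0..<m}. int (length (\<tau> (y l))))
      else - (\<Sum>l\<in>{m..<0}. int (length (\<tau> (y l)))))"

definition seq_subst :: "('a \<Rightarrow> 'a list) \<Rightarrow> (int \<Rightarrow> 'a) \<Rightarrow> int \<Rightarrow> 'a" where
  "seq_subst \<tau> y i =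
     (let m = (THE m. block_start \<tau> y m \<le> i \<and> i < block_start \<tau> y (m + 1))
      in \<tau> (y m) ! nat (i - block_start \<tau> y m))"

definition concat_of_words :: "'a set \<Rightarrow> ('a \<Rightarrow> 'a list) \<Rightarrow> nat \<Rightarrow> (int \<Rightarrow> 'a) \<Rightarrow> bool" where
  "concat_of_words K \<sigma> k z \<longleftrightarrow>
     (\<exists>m :: int \<Rightarrow> int. strict_mono m \<and>
        (\<forall>l. \<exists>a\<in>K. window z (m l) (m (l + 1) - 1) = subst_pow \<sigma> k a))"

end

theory Submission
  imports Defs
begin

text \<open>By primitivity, letters of deep iterates \<open>\<sigma>\<^sup>j(b)\<close> accumulate at every point of \<open>K\<close>, and
  each \<open>\<sigma>\<^sup>i\<close> is continuous; so every central window of \<open>z\<close> is approximated, letter by letter,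
  by a factor of some \<open>\<sigma>\<^sup>j(b)\<close> with \<open>j \<ge> k\<close>. Such a factor lies in \<open>\<sigma>\<^sup>k(u)\<close> for
  \<open>u = \<sigma>\<^sup>j\<^sup>-\<^sup>k(b)\<close>. Reading \<open>u\<close> as a bi-infinite sequence \<open>y\<^sub>n\<close>, the factor becomes a
  window of \<open>\<sigma>\<^sup>k(y\<^sub>n)\<close> shifted by some \<open>r\<^sub>n\<close> below the maximal length \<open>M\<close> of a
  \<open>\<sigma>\<^sup>k\<close>-word, and as these lengths are bounded, the central windows of \<open>y\<^sub>n\<close> are factors
  of \<open>u\<close>. Along a subsequence \<open>r\<^sub>n = r\<close> is constant and \<open>y\<^sub>n\<close> converges coordinatewise
  (Tychonoff); by continuity of \<open>\<sigma>\<^sup>k\<close> the limit \<open>y\<close> lies in \<open>X\<^sub>\<sigma>\<close> and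
  \<open>z = S\<^sup>r \<sigma>\<^sup>k(y)\<close>, whose block boundaries exhibit \<open>z\<close> as a concatenation of
  \<open>\<sigma>\<^sup>k\<close>-words.\<close>

lemma funpow_subst_word_append:
  "(subst_word \<sigma> ^^ k) (xs @ ys) = (subst_word \<sigma> ^^ k) xs @ (subst_word \<sigma> ^^ k) ys"
  by (induction k) (simp_all add: subst_word_def)

lemma funpow_subst_word_eq_concat: "(subst_word \<sigma> ^^ k) w = concat (map (subst_pow \<sigma> k) w)"
proof (induction w)
  case Nil
  show ?case by (induction k) (simp_all add: subst_word_def)
next
  case (Cons a w)
  then show ?case
    using funpow_subst_word_append[where xs="[a]" and ys=w] by (simp add: subst_pow_def)
qed

lemma subst_pow_0 [simp]: "subst_pow \<sigma> 0 a = [a]"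
  by (simp add: subst_pow_def)

lemma subst_pow_1 [simp]: "subst_pow \<sigma> (Suc 0) a = \<sigma> a"
  by (simp add: subst_pow_def subst_word_def)

lemma subst_pow_add: "subst_pow \<sigma> (m + n) a = concat (map (subst_pow \<sigma> n) (subst_pow \<sigma> m a))"
proof -
  have "subst_pow \<sigma> (m + n) a = (subst_word \<sigma> ^^ n) (subst_pow \<sigma> m a)"
    unfolding subst_pow_def by (simp only: add.commute[of m n] funpow_add comp_apply)
  then show ?thesis by (simp only: funpow_subst_word_eq_concat)
qed

lemma subst_pow_Suc: "subst_pow \<sigma> (Suc k) a = concat (map \<sigma> (subst_pow \<sigma> k a))"
proof -
  have "subst_pow \<sigma> (Suc 0) = \<sigma>" by (rule ext) simp
  then show ?thesis using subst_pow_add[of \<sigma> k "Suc 0" a] by simp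
qed

lemma subst_pow_in_Kplus:
  assumes "gen_subst K \<sigma>" "a \<in> K"
  shows "subst_pow \<sigma> k a \<noteq> [] \<and> set (subst_pow \<sigma> k a) \<subseteq> K"
proof (induction k)
  case 0
  then show ?case using assms by simp
next
  case (Suc k)
  then obtain b w where "subst_pow \<sigma> k a = b # w" by (cases "subst_pow \<sigma> k a") auto
  then show ?case using Suc assms(1) by (auto simp: subst_pow_Suc gen_subst_def)
qed

section \<open>Letterwise convergence of words\<close>

definition words_tendsto :: "(nat \<Rightarrow> 'a::topological_space list) \<Rightarrow> 'a list \<Rightarrow> bool" where
  "words_tendsto ws w \<longleftrightarrow> eventually (\<lambda>n. length (ws n) = length w) sequentially \<and>
     (\<forall>i<length w. (\<lambda>n. ws n ! i) \<longlonglongrightarrow> w ! i)"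

lemma words_tendsto_Nil: "words_tendsto ws [] \<longleftrightarrow> eventually (\<lambda>n. ws n = []) sequentially"
  by (simp add: words_tendsto_def)

lemma words_tendsto_cong:
  assumes "words_tendsto ws w" "eventually (\<lambda>n. ws n = vs n) sequentially"
  shows "words_tendsto vs w"
proof -
  have "eventually (\<lambda>n. length (vs n) = length w) sequentially"
    using assms unfolding words_tendsto_def by (auto elim: eventually_elim2)
  moreover have "(\<lambda>n. vs n ! i) \<longlonglongrightarrow> w ! i" if "i < length w" for i
  proof (rule Lim_transform_eventually)
    show "(\<lambda>n. ws n ! i) \<longlonglongrightarrow> w ! i" using assms that by (simp add: words_tendsto_def)
    show "eventually (\<lambda>n. ws n ! i = vs n ! i) sequentially"
      using assms(2) by eventually_elim simp
  qed
  ultimately show ?thesis by (simp add: words_tendsto_def)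
qed

lemma words_tendsto_append:
  assumes "words_tendsto xs u" "words_tendsto ys v"
  shows "words_tendsto (\<lambda>n. xs n @ ys n) (u @ v)"
proof -
  have len: "eventually (\<lambda>n. length (xs n) = length u \<and> length (ys n) = length v) sequentially"
    using assms unfolding words_tendsto_def by (simp add: eventually_conj_iff)
  have "(\<lambda>n. (xs n @ ys n) ! i) \<longlonglongrightarrow> (u @ v) ! i" if "i < length u + length v" for i
  proof (cases "i < length u")
    case True
    have "(\<lambda>n. xs n ! i) \<longlonglongrightarrow> (u @ v) ! i" using assms True by (simp add: words_tendsto_def nth_append)
    moreover have "eventually (\<lambda>n. xs n ! i = (xs n @ ys n) ! i) sequentially"
      using len by eventually_elim (simp add: nth_append True)
    ultimately show ?thesis by (rule Lim_transform_eventually)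
  next
    case False
    have "(\<lambda>n. ys n ! (i - length u)) \<longlonglongrightarrow> (u @ v) ! i"
      using assms False that by (simp add: words_tendsto_def nth_append)
    moreover have "eventually (\<lambda>n. ys n ! (i - length u) = (xs n @ ys n) ! i) sequentially"
      using len by eventually_elim (simp add: nth_append False)
    ultimately show ?thesis by (rule Lim_transform_eventually)
  qed
  moreover have "eventually (\<lambda>n. length (xs n @ ys n) = length (u @ v)) sequentially"
    using len by eventually_elim simp
  ultimately show ?thesis by (simp add: words_tendsto_def)
qed

lemma words_tendsto_take_drop:
  assumes "words_tendsto ws w"
  shows "words_tendsto (\<lambda>n. take l (drop p (ws n))) (take l (drop p w))"
proof -
  have len: "eventually (\<lambda>n. length (ws n) = length w) sequentially"
    using assms unfolding words_tendsto_def by simp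
  have "(\<lambda>n. take l (drop p (ws n)) ! i) \<longlonglongrightarrow> take l (drop p w) ! i"
    if i: "i < length (take l (drop p w))" for i
  proof (rule Lim_transform_eventually)
    show "(\<lambda>n. ws n ! (p + i)) \<longlonglongrightarrow> take l (drop p w) ! i"
      using assms i by (auto simp: words_tendsto_def)
    show "eventually (\<lambda>n. ws n ! (p + i) = take l (drop p (ws n)) ! i) sequentially"
      using len by eventually_elim (use i in auto)
  qed
  moreover have "eventually (\<lambda>n. length (take l (drop p (ws n))) = length (take l (drop p w))) sequentially"
    using len by eventually_elim simp
  ultimately show ?thesis by (simp add: words_tendsto_def)
qed

definition close_words :: "real \<Rightarrow> 'a::metric_space list \<Rightarrow> 'a list \<Rightarrow> bool" where
  "close_words e f w \<longleftrightarrow> length f = length w \<and> (\<forall>i<length w. dist (f ! i) (w ! i) < e)"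

lemma close_words_trans:
  assumes "close_words d f g" "close_words e g w"
  shows "close_words (d + e) f w"
  unfolding close_words_def
proof safe
  show "length f = length w" using assms by (simp add: close_words_def)
  fix i assume i: "i < length w"
  have "dist (f ! i) (w ! i) \<le> dist (f ! i) (g ! i) + dist (g ! i) (w ! i)"
    by (rule dist_triangle)
  also have "\<dots> < d + e" using assms i by (intro add_strict_mono) (auto simp: close_words_def)
  finally show "dist (f ! i) (w ! i) < d + e" .
qed

lemma words_tendsto_eventually_close:
  assumes "words_tendsto ws w" "e > 0"
  shows "eventually (\<lambda>n. close_words e (ws n) w) sequentially"
proof -
  have "\<forall>i\<in>{..<length w}. eventually (\<lambda>n. dist (ws n ! i) (w ! i) < e) sequentially"
    using assms by (simp add: words_tendsto_def tendsto_iff)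
  then have "eventually (\<lambda>n. \<forall>i\<in>{..<length w}. dist (ws n ! i) (w ! i) < e) sequentially"
    by (intro eventually_ball_finite) auto
  with assms(1) show ?thesis
    unfolding words_tendsto_def close_words_def by (auto elim: eventually_elim2)
qed

lemma gen_subst_words_tendsto:
  assumes gs: "gen_subst K \<sigma>" and x: "\<And>n. x n \<in> K" and a: "a \<in> K" and lim: "x \<longlonglongrightarrow> a"
  shows "words_tendsto (\<lambda>n. \<sigma> (x n)) (\<sigma> a)"
proof -
  have "continuous_on K (\<lambda>a. length (\<sigma> a))" using gs by (simp add: gen_subst_def)
  then have "(\<lambda>n. length (\<sigma> (x n))) \<longlonglongrightarrow> length (\<sigma> a)"
    using continuous_on_sequentially[of K "\<lambda>a. length (\<sigma> a)"] x a lim by (auto simp: o_def)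
  then have len: "eventually (\<lambda>n. length (\<sigma> (x n)) = length (\<sigma> a)) sequentially"
    by (simp add: tendsto_discrete)
  have "(\<lambda>n. \<sigma> (x n) ! j) \<longlonglongrightarrow> \<sigma> a ! j" if j: "j < length (\<sigma> a)" for j
  proof -
    \<comment> \<open>the \<open>j\<close>-th letter is only continuous where it exists, so move \<open>x\<close> into that set\<close>
    define S where "S = {b\<in>K. j < length (\<sigma> b)}"
    define x' where "x' n = (if x n \<in> S then x n else a)" for n
    have aS: "a \<in> S" using a j by (simp add: S_def)
    have x'_x: "eventually (\<lambda>n. x' n = x n) sequentially"
      using len by eventually_elim (use j x in \<open>simp add: x'_def S_def\<close>)
    have "x' \<longlonglongrightarrow> a"
      using lim x'_x by (rule Lim_transform_eventually[OF _ eventually_mono]) simp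
    moreover have "\<forall>n. x' n \<in> S" using aS by (simp add: x'_def)
    moreover have "continuous_on S (\<lambda>b. \<sigma> b ! j)" using gs by (simp add: gen_subst_def S_def)
    ultimately have "(\<lambda>n. \<sigma> (x' n) ! j) \<longlonglongrightarrow> \<sigma> a ! j"
      using continuous_on_sequentially[of S "\<lambda>b. \<sigma> b ! j"] aS by (auto simp: o_def)
    moreover have "eventually (\<lambda>n. \<sigma> (x' n) ! j = \<sigma> (x n) ! j) sequentially"
      using x'_x by eventually_elim simp
    ultimately show ?thesis by (rule Lim_transform_eventually)
  qed
  with len show ?thesis by (simp add: words_tendsto_def)
qed

lemma gen_subst_words_tendsto_concat:
  assumes gs: "gen_subst K \<sigma>"
  shows "words_tendsto ws w \<Longrightarrow> (\<And>n. set (ws n) \<subseteq> K) \<Longrightarrow> set w \<subseteq> K \<Longrightarrow>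
    words_tendsto (\<lambda>n. concat (map \<sigma> (ws n))) (concat (map \<sigma> w))"
proof (induction w arbitrary: ws)
  case Nil
  then have "eventually (\<lambda>n. ws n = []) sequentially" by (simp add: words_tendsto_Nil)
  then have "eventually (\<lambda>n. concat (map \<sigma> (ws n)) = []) sequentially"
    by eventually_elim simp
  then show ?case by (simp add: words_tendsto_Nil)
next
  case (Cons a w)
  define x where "x n = (if ws n = [] then a else hd (ws n))" for n
  define vs where "vs n = take (length w) (drop 1 (ws n))" for n
  have len: "eventually (\<lambda>n. length (ws n) = Suc (length w)) sequentially"
    using Cons.prems(1) by (simp add: words_tendsto_def)
  have aK: "a \<in> K" and wK: "set w \<subseteq> K" using Cons.prems(3) by auto
  have xK: "x n \<in> K" for n
    using Cons.prems(2)[of n] aK by (cases "ws n") (auto simp: x_def)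
  have "(\<lambda>n. ws n ! 0) \<longlonglongrightarrow> a" using Cons.prems(1) by (auto simp: words_tendsto_def)
  moreover have "eventually (\<lambda>n. ws n ! 0 = x n) sequentially"
    using len by eventually_elim (auto simp: x_def hd_conv_nth)
  ultimately have "x \<longlonglongrightarrow> a" by (rule Lim_transform_eventually)
  then have head: "words_tendsto (\<lambda>n. \<sigma> (x n)) (\<sigma> a)"
    by (rule gen_subst_words_tendsto[OF gs xK aK])
  have "words_tendsto vs (take (length w) (drop 1 (a # w)))"
    unfolding vs_def by (rule words_tendsto_take_drop[OF Cons.prems(1)])
  moreover have "set (vs n) \<subseteq> K" for n
    using Cons.prems(2)[of n] unfolding vs_def by (meson order.trans set_drop_subset set_take_subset)
  ultimately have tail: "words_tendsto (\<lambda>n. concat (map \<sigma> (vs n))) (concat (map \<sigma> w))"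
    using Cons.IH wK by simp
  have "eventually (\<lambda>n. \<sigma> (x n) @ concat (map \<sigma> (vs n)) = concat (map \<sigma> (ws n))) sequentially"
    using len by eventually_elim (auto simp: x_def vs_def length_Suc_conv)
  with words_tendsto_append[OF head tail] show ?case
    by (simp add: words_tendsto_cong)
qed

lemma subst_pow_words_tendsto:
  assumes gs: "gen_subst K \<sigma>" and x: "\<And>n. x n \<in> K" and a: "a \<in> K" and lim: "x \<longlonglongrightarrow> a"
  shows "words_tendsto (\<lambda>n. subst_pow \<sigma> k (x n)) (subst_pow \<sigma> k a)"
proof (induction k)
  case 0
  then show ?case using lim by (simp add: words_tendsto_def)
next
  case (Suc k)
  show ?case unfolding subst_pow_Suc
    by (rule gen_subst_words_tendsto_concat[OF gs Suc]) (use subst_pow_in_Kplus[OF gs] x a in auto)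
qed

lemma subst_pow_length_bounded:
  assumes gs: "gen_subst K \<sigma>" and K: "compact K"
  obtains M where "\<And>a. a \<in> K \<Longrightarrow> length (subst_pow \<sigma> k a) \<le> M"
proof (cases "K = {}")
  case False
  have "continuous_on K (\<lambda>a. length (subst_pow \<sigma> k a))"
  proof (rule continuous_on_sequentiallyI)
    fix u a assume "\<forall>n. u n \<in> K" "a \<in> K" "u \<longlonglongrightarrow> a"
    then have "words_tendsto (\<lambda>n. subst_pow \<sigma> k (u n)) (subst_pow \<sigma> k a)"
      using subst_pow_words_tendsto[OF gs] by blast
    then show "(\<lambda>n. length (subst_pow \<sigma> k (u n))) \<longlonglongrightarrow> length (subst_pow \<sigma> k a)"
      by (simp add: words_tendsto_def tendsto_discrete)
  qed
  then show ?thesis using continuous_attains_sup[OF K False] that by blast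
qed simp

section \<open>Approximation by factors of deep iterates\<close>

lemma sublist_iff_take_drop:
  "sublist w v \<longleftrightarrow> (\<exists>p. p + length w \<le> length v \<and> w = take (length w) (drop p v))"
proof
  assume "sublist w v"
  then obtain ps ss where "v = ps @ w @ ss" by (auto simp: sublist_def)
  then show "\<exists>p. p + length w \<le> length v \<and> w = take (length w) (drop p v)"
    by (intro exI[of _ "length ps"]) simp
next
  assume "\<exists>p. p + length w \<le> length v \<and> w = take (length w) (drop p v)"
  then obtain p where "w = take (length w) (drop p v)" by blast
  then have "v = take p v @ w @ drop (length w) (drop p v)"
    by (metis append_take_drop_id)
  then show "sublist w v" by (metis sublist_appendI)
qed

lemma sublist_take_drop: "sublist (take l (drop p v)) v"
  using sublist_order.order_trans[OF sublist_take sublist_drop] by blast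

lemma sublist_concat: "x \<in> set xs \<Longrightarrow> sublist x (concat xs)"
  by (metis concat_append concat.simps(2) split_list sublist_appendI)

lemma LIMSEQ_dist_le_inverse_Suc:
  fixes x :: "nat \<Rightarrow> 'a::metric_space"
  assumes "eventually (\<lambda>n. dist (x n) a \<le> inverse (real (Suc n))) sequentially"
  shows "x \<longlonglongrightarrow> a"
proof -
  have "eventually (\<lambda>n. norm (dist (x n) a) \<le> inverse (real (Suc n))) sequentially"
    using assms by eventually_elim simp
  then have "(\<lambda>n. dist (x n) a) \<longlonglongrightarrow> 0"
    by (rule Lim_null_comparison[OF _ LIMSEQ_inverse_real_of_nat])
  then show ?thesis by (rule tendsto_dist_iff[THEN iffD2])
qed

lemma primitive_letters_accumulate:
  assumes prim: "primitive K \<sigma>" and a: "a \<in> K" and b: "b \<in> K"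
  obtains x J where "\<And>n. k \<le> J n" "\<And>n. x n \<in> set (subst_pow \<sigma> (J n) b)" "x \<longlonglongrightarrow> a"
proof -
  have "\<exists>J x. k \<le> J \<and> x \<in> set (subst_pow \<sigma> J b) \<and> dist x a \<le> inverse (real (Suc n))" for n
  proof -
    define V where "V = K \<inter> ball a (inverse (real (Suc n)))"
    have "openin (top_of_set K) V" unfolding V_def by (rule openin_open_Int) simp
    moreover have "V \<noteq> {}" using a by (auto simp: V_def)
    ultimately obtain j where "\<forall>a\<in>K. \<forall>k'\<ge>j. \<exists>x\<in>set (subst_pow \<sigma> k' a). x \<in> V"
      using prim unfolding primitive_def by blast
    then obtain x where "x \<in> set (subst_pow \<sigma> (max j k) b)" "x \<in> V"
      using b by (meson max.cobounded1)
    then show ?thesis by (intro exI[of _ "max j k"] exI[of _ x]) (auto simp: V_def dist_commute)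
  qed
  then obtain J x where "\<And>n. k \<le> J n \<and> x n \<in> set (subst_pow \<sigma> (J n) b) \<and>
      dist (x n) a \<le> inverse (real (Suc n))"
    by metis
  then show ?thesis by (intro that[of J x] LIMSEQ_dist_le_inverse_Suc) auto
qed

lemma subst_factor_approx_deep:
  assumes gs: "gen_subst K \<sigma>" and prim: "primitive K \<sigma>" and b: "b \<in> K"
    and fac: "subst_factor K \<sigma> w" and e: "e > 0"
  shows "\<exists>j\<ge>k. \<exists>f. sublist f (subst_pow \<sigma> j b) \<and> close_words e f w"
proof -
  obtain j a where a: "a \<in> K" and "sublist w (subst_pow \<sigma> j a)"
    using fac by (auto simp: subst_factor_def)
  then obtain p where p: "w = take (length w) (drop p (subst_pow \<sigma> j a))"
    by (auto simp: sublist_iff_take_drop)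
  obtain x J where J: "\<And>n. k \<le> J n" and x: "\<And>n. x n \<in> set (subst_pow \<sigma> (J n) b)"
    and lim: "x \<longlonglongrightarrow> a"
    using primitive_letters_accumulate[OF prim a b] by blast
  have "\<And>n. x n \<in> K" using x subst_pow_in_Kplus[OF gs b] by blast
  then have "words_tendsto (\<lambda>n. subst_pow \<sigma> j (x n)) (subst_pow \<sigma> j a)"
    using subst_pow_words_tendsto[OF gs _ a lim] by blast
  then have "words_tendsto (\<lambda>n. take (length w) (drop p (subst_pow \<sigma> j (x n))))
      (take (length w) (drop p (subst_pow \<sigma> j a)))"
    by (rule words_tendsto_take_drop)
  then have "words_tendsto (\<lambda>n. take (length w) (drop p (subst_pow \<sigma> j (x n)))) w"
    by (simp only: p[symmetric])
  then obtain n where close: "close_words e (take (length w) (drop p (subst_pow \<sigma> j (x n)))) w"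
    using eventually_happens'[OF sequentially_bot words_tendsto_eventually_close[OF _ e]] by blast
  have "sublist (subst_pow \<sigma> j (x n)) (subst_pow \<sigma> (J n + j) b)"
    unfolding subst_pow_add by (rule sublist_concat) (use x in simp)
  then have "sublist (take (length w) (drop p (subst_pow \<sigma> j (x n)))) (subst_pow \<sigma> (J n + j) b)"
    by (rule sublist_order.order_trans[OF sublist_take_drop])
  moreover have "k \<le> J n + j" using J[of n] by simp
  ultimately show ?thesis using close by blast
qed

lemma lang_approx_deep:
  assumes gs: "gen_subst K \<sigma>" and prim: "primitive K \<sigma>" and b: "b \<in> K"
    and w: "w \<in> lang K \<sigma>" and e: "e > 0"
  shows "\<exists>j\<ge>k. \<exists>f. sublist f (subst_pow \<sigma> j b) \<and> close_words e f w"
  using w unfolding lang_def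
proof (elim CollectE conjE disjE exE)
  assume "subst_factor K \<sigma> w"
  then show ?thesis by (rule subst_factor_approx_deep[OF gs prim b _ e])
next
  fix ws assume ws: "\<forall>m. subst_factor K \<sigma> (ws m) \<and> length (ws m) = length w"
    "\<forall>i<length w. (\<lambda>m. ws m ! i) \<longlonglongrightarrow> w ! i"
  then have "words_tendsto ws w" by (simp add: words_tendsto_def)
  then obtain m where m: "close_words (e / 2) (ws m) w"
    using eventually_happens'[OF sequentially_bot words_tendsto_eventually_close[of ws w "e / 2"]] e
    by auto
  obtain j f where "j \<ge> k" "sublist f (subst_pow \<sigma> j b)" "close_words (e / 2) f (ws m)"
    using subst_factor_approx_deep[OF gs prim b _, of "ws m" "e / 2" k] ws(1) e by auto
  with close_words_trans[of "e / 2" f "ws m" "e / 2" w] m show ?thesis by auto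
qed

lemma length_window [simp]: "length (window x a b) = nat (b - a + 1)"
  by (simp add: window_def)

lemma nth_window: "i < nat (b - a + 1) \<Longrightarrow> window x a b ! i = x (a + int i)"
  by (simp add: window_def)

lemma window_shift: "window (\<lambda>t. x (t + c)) a b = window x (a + c) (b + c)"
  by (rule nth_equalityI) (auto simp: nth_window algebra_simps)

lemma window_split:
  assumes "p \<le> q" "q \<le> r + 1"
  shows "window x p r = window x p (q - 1) @ window x q r"
proof (cases "q \<le> r")
  case True
  then show ?thesis using assms upto_split1[of p q r] by (simp add: window_def)
next
  case False
  then have "q = r + 1" using assms by simp
  then show ?thesis by (simp add: window_def)
qed

lemma funpow_shift: "(shift ^^ i) x = (\<lambda>t. x (t + int i))"
  by (induction i arbitrary: x) (auto simp: shift_def algebra_simps)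

lemma block_start_0 [simp]: "block_start \<tau> y 0 = 0"
  by (simp add: block_start_def)

lemma block_start_succ: "block_start \<tau> y (m + 1) = block_start \<tau> y m + int (length (\<tau> (y m)))"
proof (cases "0 \<le> m")
  case True
  then have "{0..<m + 1} = insert m {0..<m}" by auto
  then show ?thesis using True by (simp add: block_start_def)
next
  case False
  then have "{m..<0} = insert m {m + 1..<0}" by auto
  then show ?thesis using False by (simp add: block_start_def)
qed

lemma block_start_cong:
  assumes "\<And>l. - \<bar>m\<bar> \<le> l \<Longrightarrow> l \<le> \<bar>m\<bar> \<Longrightarrow> length (\<tau> (y l)) = length (\<tau>' (y' l))"
  shows "block_start \<tau> y m = block_start \<tau>' y' m"
  unfolding block_start_def using assms by (auto intro!: sum.cong)

context
  fixes \<tau> :: "'a \<Rightarrow> 'a list" and y :: "int \<Rightarrow> 'a"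
  assumes nonempty: "\<And>l. \<tau> (y l) \<noteq> []"
begin

lemma block_start_less_succ: "block_start \<tau> y m < block_start \<tau> y (m + 1)"
  using nonempty[of m] by (simp add: block_start_succ)

lemma strict_mono_block_start: "strict_mono (block_start \<tau> y)"
proof (rule strict_monoI)
  fix m m' :: int assume "m < m'"
  then have "m + 1 \<le> m'" by simp
  then show "block_start \<tau> y m < block_start \<tau> y m'"
  proof (induction m' rule: int_ge_induct)
    case base
    then show ?case by (rule block_start_less_succ)
  next
    case (step i)
    then show ?case using block_start_less_succ[of i] by simp
  qed
qed

lemma block_start_mono: "m \<le> m' \<Longrightarrow> block_start \<tau> y m \<le> block_start \<tau> y m'"
  using strict_mono_block_start by (simp add: strict_mono_less_eq)

lemma ex_block_containing: "\<exists>m. block_start \<tau> y m \<le> Q \<and> Q < block_start \<tau> y (m + 1)"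
proof (induction Q rule: int_induct[where k=0])
  case base
  then show ?case using block_start_less_succ[of 0] by (intro exI[of _ 0]) simp
next
  case (step1 i)
  then obtain m where m: "block_start \<tau> y m \<le> i" "i < block_start \<tau> y (m + 1)" by blast
  show ?case
  proof (cases "i + 1 < block_start \<tau> y (m + 1)")
    case True
    then show ?thesis using m by (intro exI[of _ m]) simp
  next
    case False
    then show ?thesis using m block_start_less_succ[of "m + 1"] by (intro exI[of _ "m + 1"]) simp
  qed
next
  case (step2 i)
  then obtain m where m: "block_start \<tau> y m \<le> i" "i < block_start \<tau> y (m + 1)" by blast
  show ?case
  proof (cases "block_start \<tau> y m \<le> i - 1")
    case True
    then show ?thesis using m by (intro exI[of _ m]) simp
  next
    case False
    then show ?thesis using m block_start_less_succ[of "m - 1"] by (intro exI[of _ "m - 1"]) simp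
  qed
qed

lemma ex1_block_containing: "\<exists>!m. block_start \<tau> y m \<le> Q \<and> Q < block_start \<tau> y (m + 1)"
proof (rule ex_ex1I)
  show "\<exists>m. block_start \<tau> y m \<le> Q \<and> Q < block_start \<tau> y (m + 1)"
    by (rule ex_block_containing)
  fix m m'
  assume "block_start \<tau> y m \<le> Q \<and> Q < block_start \<tau> y (m + 1)"
    and "block_start \<tau> y m' \<le> Q \<and> Q < block_start \<tau> y (m' + 1)"
  then have "block_start \<tau> y m < block_start \<tau> y (m' + 1)"
    "block_start \<tau> y m' < block_start \<tau> y (m + 1)"
    by auto
  then show "m = m'" by (simp add: strict_mono_less[OF strict_mono_block_start])
qed

lemma seq_subst_block_start:
  assumes "r < length (\<tau> (y m))"
  shows "seq_subst \<tau> y (block_start \<tau> y m + int r) = \<tau> (y m) ! r"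
proof -
  have "block_start \<tau> y m \<le> block_start \<tau> y m + int r \<and>
      block_start \<tau> y m + int r < block_start \<tau> y (m + 1)"
    using assms by (simp add: block_start_succ)
  then have "(THE m'. block_start \<tau> y m' \<le> block_start \<tau> y m + int r \<and>
      block_start \<tau> y m + int r < block_start \<tau> y (m' + 1)) = m"
    using ex1_block_containing by (rule the1_equality[rotated])
  then show ?thesis by (simp add: seq_subst_def)
qed

lemma window_seq_subst_block:
  "window (seq_subst \<tau> y) (block_start \<tau> y m) (block_start \<tau> y (m + 1) - 1) = \<tau> (y m)"
  by (rule nth_equalityI) (simp_all add: block_start_succ nth_window seq_subst_block_start)

lemma window_seq_subst_blocks:
  assumes "a \<le> e"
  shows "window (seq_subst \<tau> y) (block_start \<tau> y a) (block_start \<tau> y e - 1) =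
    concat (map \<tau> (window y a (e - 1)))"
  using assms
proof (induction e rule: int_ge_induct)
  case base
  then show ?case by (simp add: window_def)
next
  case (step e)
  have "window (seq_subst \<tau> y) (block_start \<tau> y a) (block_start \<tau> y (e + 1) - 1)
      = window (seq_subst \<tau> y) (block_start \<tau> y a) (block_start \<tau> y e - 1) @
        window (seq_subst \<tau> y) (block_start \<tau> y e) (block_start \<tau> y (e + 1) - 1)"
    using block_start_mono[OF step(1)] block_start_less_succ[of e] by (intro window_split) auto
  also have "\<dots> = concat (map \<tau> (window y a (e - 1) @ [y e]))"
    using step(2) window_seq_subst_block by simp
  also have "window y a (e - 1) @ [y e] = window y a e"
    using window_split[of a e e y] step(1) by (simp add: window_def)
  finally show ?case by simp
qed

end

section \<open>Desubstitution of central windows\<close>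

lemma length_concat_map_le:
  assumes "\<And>x. x \<in> set u \<Longrightarrow> length (\<tau> x) \<le> M"
  shows "length (concat (map \<tau> u)) \<le> length u * M"
  using assms by (induction u) (auto intro!: add_mono)

lemma concat_map_block_index:
  assumes "P < length (concat (map \<tau> u))"
  obtains c where "c < length u" "length (concat (map \<tau> (take c u))) \<le> P"
    "P < length (concat (map \<tau> (take c u))) + length (\<tau> (u ! c))"
  using assms
proof (induction u arbitrary: P thesis)
  case Nil
  then show ?case by simp
next
  case (Cons a u)
  show ?case
  proof (cases "P < length (\<tau> a)")
    case True
    then show ?thesis using Cons.prems(1)[of 0] by simp
  next
    case False
    then have "P - length (\<tau> a) < length (concat (map \<tau> u))" using Cons.prems(2) by simp
    then obtain c where "c < length u" "length (concat (map \<tau> (take c u))) \<le> P - length (\<tau> a)"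
        "P - length (\<tau> a) < length (concat (map \<tau> (take c u))) + length (\<tau> (u ! c))"
      by (rule Cons.IH[rotated])
    then show ?thesis using False Cons.prems(1)[of "Suc c"] by simp
  qed
qed

lemma block_index_far_from_ends:
  assumes M: "\<And>x. x \<in> set u \<Longrightarrow> length (\<tau> x) \<le> M" and c: "c < length u"
    and P: "length (concat (map \<tau> (take c u))) \<le> P"
      "P < length (concat (map \<tau> (take c u))) + length (\<tau> (u ! c))"
    and N: "(N + 1) * M \<le> P" "P + (N + 1) * M < length (concat (map \<tau> u))"
  shows "N < c" "c + N < length u"
proof -
  let ?S = "length (concat (map \<tau> (take c u)))"
  let ?T = "length (concat (map \<tau> (drop (Suc c) u)))"
  have S: "?S \<le> c * M"
    using length_concat_map_le[where u="take c u"] M c by (auto dest: in_set_takeD)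
  have T: "?T \<le> (length u - Suc c) * M"
    using length_concat_map_le[where u="drop (Suc c) u"] M by (auto dest: in_set_dropD)
  have uc: "length (\<tau> (u ! c)) \<le> M" using M c by simp
  have "length (concat (map \<tau> u)) =
      length (concat (map \<tau> (take (Suc c) u))) + ?T"
    by (metis append_take_drop_id concat_append length_append map_append)
  also have "length (concat (map \<tau> (take (Suc c) u))) = ?S + length (\<tau> (u ! c))"
    using c by (simp add: take_Suc_conv_app_nth)
  finally have split: "length (concat (map \<tau> u)) = ?S + length (\<tau> (u ! c)) + ?T" .
  have "(N + 1) * M < c * M + M" using N(1) P(2) S uc by linarith
  then have "(N + 1) * M < (c + 1) * M" by (simp add: algebra_simps)
  then show "N < c" by simp
  have "(N + 1) * M < (length u - Suc c) * M + M" using N(2) P(1) split T uc by linarith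
  then have "(N + 1) * M < (length u - Suc c + 1) * M" by (simp add: algebra_simps)
  then have "N < length u - Suc c" by simp
  then show "c + N < length u" by linarith
qed

context
  fixes u :: "'a list" and c :: nat and y :: "int \<Rightarrow> 'a"
  assumes y_u: "\<And>l. l < length u \<Longrightarrow> y (int l - int c) = u ! l"
begin

lemma window_eq_take_drop:
  assumes "N \<le> c" "c + N < length u"
  shows "window y (- int N) (int N) = take (2 * N + 1) (drop (c - N) u)"
proof (rule nth_equalityI)
  have len: "length (window y (- int N) (int N)) = 2 * N + 1" by simp
  then show "length (window y (- int N) (int N)) = length (take (2 * N + 1) (drop (c - N) u))"
    using assms by simp
  fix i assume "i < length (window y (- int N) (int N))"
  then have i: "i < 2 * N + 1" by (simp only: len)
  then have "window y (- int N) (int N) ! i = y (- int N + int i)" by (simp add: nth_window)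
  also have "- int N + int i = int (c - N + i) - int c" using assms by simp
  also have "y (int (c - N + i) - int c) = u ! (c - N + i)" by (rule y_u) (use i assms in simp)
  also have "\<dots> = take (2 * N + 1) (drop (c - N) u) ! i" using i assms by simp
  finally show "window y (- int N) (int N) ! i = take (2 * N + 1) (drop (c - N) u) ! i" .
qed

lemma seq_subst_concat_nth:
  assumes ne: "\<And>l. \<tau> (y l) \<noteq> []" and c: "c \<le> length u"
    and q: "q < length (concat (map \<tau> u))"
  shows "seq_subst \<tau> y (int q - int (length (concat (map \<tau> (take c u))))) = concat (map \<tau> u) ! q"
proof -
  let ?X = "seq_subst \<tau> y" and ?S = "length (concat (map \<tau> (take c u)))"
  have "window y (- int c) (int (length u) - int c - 1) = u"
    by (rule nth_equalityI) (simp_all add: nth_window y_u)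
  then have whole: "window ?X (block_start \<tau> y (- int c)) (block_start \<tau> y (int (length u) - int c) - 1)
      = concat (map \<tau> u)"
    using window_seq_subst_blocks[where \<tau>=\<tau> and y=y, OF ne, of "- int c" "int (length u) - int c"] c by simp
  have "window y (- int c) (- 1) = take c u"
    by (rule nth_equalityI) (use c in \<open>simp_all add: nth_window y_u\<close>)
  then have prefix: "window ?X (block_start \<tau> y (- int c)) (- 1) = concat (map \<tau> (take c u))"
    using window_seq_subst_blocks[where \<tau>=\<tau> and y=y, OF ne, of "- int c" 0] by simp
  have "nat (- block_start \<tau> y (- int c)) = ?S"
    using arg_cong[OF prefix, of length] by simp
  moreover have "block_start \<tau> y (- int c) \<le> 0"
    using block_start_mono[where \<tau>=\<tau> and y=y, OF ne, of "- int c" 0] by simp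
  ultimately have start: "block_start \<tau> y (- int c) = - int ?S" by linarith
  have "concat (map \<tau> u) ! q
      = window ?X (block_start \<tau> y (- int c)) (block_start \<tau> y (int (length u) - int c) - 1) ! q"
    by (simp only: whole)
  also have "\<dots> = ?X (block_start \<tau> y (- int c) + int q)"
    by (rule nth_window) (use arg_cong[OF whole, of length] q in simp)
  finally show ?thesis by (simp add: start)
qed

end

lemma factor_of_image_as_window:
  assumes uK: "set u \<subseteq> K" and b: "b \<in> K" and ne: "\<And>a. a \<in> K \<Longrightarrow> \<tau> a \<noteq> []"
    and M: "\<And>a. a \<in> K \<Longrightarrow> length (\<tau> a) \<le> M"
    and p: "p + (2 * n + 1) \<le> length (concat (map \<tau> u))"
  obtains y r where "\<And>l. y l \<in> K" "r < M"
    "\<And>i. i < 2 * n + 1 \<Longrightarrow> seq_subst \<tau> y (int i - int n + int r) = concat (map \<tau> u) ! (p + i)"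
    "\<And>N. (N + 1) * M \<le> n \<Longrightarrow> sublist (window y (- int N) (int N)) u"
proof -
  have Mu: "\<And>a. a \<in> set u \<Longrightarrow> length (\<tau> a) \<le> M" using M uK by blast
  obtain c where c: "c < length u" "length (concat (map \<tau> (take c u))) \<le> p + n"
      "p + n < length (concat (map \<tau> (take c u))) + length (\<tau> (u ! c))"
    using concat_map_block_index[of "p + n" \<tau> u] p by auto
  define S where "S = length (concat (map \<tau> (take c u)))"
  \<comment> \<open>read \<open>u\<close> with the letter \<open>u ! c\<close>, whose image contains position \<open>p + n\<close>, at coordinate 0\<close>
  define y where "y l = (if 0 \<le> int c + l \<and> int c + l < int (length u) then u ! nat (int c + l) else b)"
    for l
  have y_u: "y (int l - int c) = u ! l" if "l < length u" for l
    using that by (simp add: y_def)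
  have yK: "y l \<in> K" for l using uK b by (auto simp: y_def)
  show ?thesis
  proof (rule that)
    show "y l \<in> K" for l by (rule yK)
    show "p + n - S < M" using c Mu[of "u ! c"] by (simp add: S_def)
    show "seq_subst \<tau> y (int i - int n + int (p + n - S)) = concat (map \<tau> u) ! (p + i)"
      if i: "i < 2 * n + 1" for i
    proof -
      have "int i - int n + int (p + n - S) = int (p + i) - int S" using c(2) by (simp add: S_def)
      also have "seq_subst \<tau> y \<dots> = concat (map \<tau> u) ! (p + i)" unfolding S_def
        by (rule seq_subst_concat_nth[where u=u and c=c and y=y and \<tau>=\<tau>, OF y_u ne[OF yK]])
          (use c p i in auto)
      finally show ?thesis .
    qed
    show "sublist (window y (- int N) (int N)) u" if "(N + 1) * M \<le> n" for N
    proof -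
      have "N < c" "c + N < length u"
        using block_index_far_from_ends[OF Mu c] that p by auto
      then have "window y (- int N) (int N) = take (2 * N + 1) (drop (c - N) u)"
        by (intro window_eq_take_drop[where u=u and c=c and y=y, OF y_u]) auto
      then show ?thesis by (simp add: sublist_take_drop)
    qed
  qed
qed

lemma desubstitution:
  assumes gs: "gen_subst K \<sigma>" and prim: "primitive K \<sigma>" and b: "b \<in> K"
    and z: "z \<in> subshift K \<sigma>" and M: "\<And>a. a \<in> K \<Longrightarrow> length (subst_pow \<sigma> k a) \<le> M"
    and e: "e > 0"
  obtains y r where "\<And>l. y l \<in> K" "r < M"
    "\<And>t. - int n \<le> t \<Longrightarrow> t \<le> int n \<Longrightarrow> dist (z t) (seq_subst (subst_pow \<sigma> k) y (t + int r)) < e"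
    "\<And>N. (N + 1) * M \<le> n \<Longrightarrow> subst_factor K \<sigma> (window y (- int N) (int N))"
proof -
  define w where "w = window z (- int n) (int n)"
  have "w \<in> lang K \<sigma>" using z by (simp add: subshift_def w_def)
  then obtain j f where "k \<le> j" and f: "sublist f (subst_pow \<sigma> j b)" "close_words e f w"
    using lang_approx_deep[OF gs prim b _ e] by blast
  define u where "u = subst_pow \<sigma> (j - k) b"
  define C where "C = concat (map (subst_pow \<sigma> k) u)"
  have "subst_pow \<sigma> j b = C"
    using subst_pow_add[of \<sigma> "j - k" k b] \<open>k \<le> j\<close> by (simp add: C_def u_def)
  moreover have "length f = 2 * n + 1" using f(2) by (simp add: close_words_def w_def nat_add_distrib)
  ultimately obtain p where p: "p + (2 * n + 1) \<le> length C" "f = take (2 * n + 1) (drop p C)"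
    using f(1) by (auto simp: sublist_iff_take_drop)
  have "set u \<subseteq> K" using subst_pow_in_Kplus[OF gs b] by (simp add: u_def)
  then obtain y r where y: "\<And>l. y l \<in> K" and r: "r < M"
    and image: "\<And>i. i < 2 * n + 1 \<Longrightarrow> seq_subst (subst_pow \<sigma> k) y (int i - int n + int r) = C ! (p + i)"
    and window: "\<And>N. (N + 1) * M \<le> n \<Longrightarrow> sublist (window y (- int N) (int N)) u"
    using factor_of_image_as_window[OF _ b _ M p(1)[unfolded C_def]] subst_pow_in_Kplus[OF gs]
    unfolding C_def by blast
  show ?thesis
  proof (rule that[OF y r])
    show "dist (z t) (seq_subst (subst_pow \<sigma> k) y (t + int r)) < e"
      if t: "- int n \<le> t" "t \<le> int n" for t
    proof -
      define i where "i = nat (int n + t)"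
      have i: "i < 2 * n + 1" "t = int i - int n" using t by (auto simp: i_def)
      have "seq_subst (subst_pow \<sigma> k) y (t + int r) = f ! i"
        using image[OF i(1)] p i by simp
      moreover have "w ! i = z t" using i by (simp add: w_def nth_window)
      moreover have "dist (f ! i) (w ! i) < e"
        using f(2) i(1) by (simp add: close_words_def w_def nat_add_distrib)
      ultimately show ?thesis by (simp add: dist_commute)
    qed
    show "subst_factor K \<sigma> (window y (- int N) (int N))" if "(N + 1) * M \<le> n" for N
      using window[OF that] b by (auto simp: subst_factor_def u_def)
  qed
qed

section \<open>Passing to the limit\<close>

lemma seq_compact_PiE_UNIV:
  fixes K :: "'a::metric_space set"
  assumes "compact K"
  shows "seq_compact (PiE (UNIV :: 'i::countable set) (\<lambda>_. K))"
proof -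
  have "compactin (product_topology (\<lambda>_. euclidean) UNIV) (PiE (UNIV :: 'i set) (\<lambda>_. K))"
    using assms by (simp add: compactin_PiE)
  then have "compact (PiE (UNIV :: 'i set) (\<lambda>_. K))"
    by (simp add: euclidean_product_topology)
  then show ?thesis by (rule compact_imp_seq_compact)
qed

lemma tendsto_coordinate:
  fixes Y :: "nat \<Rightarrow> 'i::countable \<Rightarrow> 'a::metric_space"
  assumes "Y \<longlonglongrightarrow> y"
  shows "(\<lambda>n. Y n l) \<longlonglongrightarrow> y l"
proof -
  have "isCont (\<lambda>x :: 'i \<Rightarrow> 'a. x l) y"
    using continuous_on_product_coordinates[of l] continuous_on_eq_continuous_at[OF open_UNIV]
    by blast
  then show ?thesis by (rule isCont_tendsto_compose[OF _ assms])
qed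

lemma subseq_constant_index_convergent:
  fixes Y :: "nat \<Rightarrow> 'i::countable \<Rightarrow> 'a::metric_space" and r :: "nat \<Rightarrow> nat"
  assumes K: "compact K" and Y: "\<And>n l. Y n l \<in> K" and r: "\<And>n. r n < (M::nat)"
  obtains s i y where "strict_mono s" "\<And>n. r (s n) = i" "\<And>l. y l \<in> K"
    "\<And>l. (\<lambda>n. Y (s n) l) \<longlonglongrightarrow> y l"
proof -
  have "range r \<subseteq> {..<M}" using r by auto
  then have "finite (range r)" by (rule finite_subset) simp
  then obtain n0 where inf: "infinite {n \<in> UNIV. r n = r n0}"
    using pigeonhole_infinite[OF infinite_UNIV_nat] by blast
  obtain s1 :: "nat \<Rightarrow> nat" where s1: "strict_mono s1" "\<forall>n. s1 n \<in> {n \<in> UNIV. r n = r n0}"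
    using infinite_enumerate[OF inf] by blast
  have "\<forall>n. Y (s1 n) \<in> PiE UNIV (\<lambda>_. K)" using Y by auto
  then obtain y and s2 :: "nat \<Rightarrow> nat" where y: "y \<in> PiE UNIV (\<lambda>_. K)" and s2: "strict_mono s2"
    and lim: "((\<lambda>n. Y (s1 n)) \<circ> s2) \<longlonglongrightarrow> y"
    by (rule seq_compactE[OF seq_compact_PiE_UNIV[OF K]])
  show ?thesis
  proof (rule that[of "s1 \<circ> s2" "r n0" y])
    show "strict_mono (s1 \<circ> s2)" using s1(1) s2 by (rule strict_mono_o)
    show "r ((s1 \<circ> s2) n) = r n0" for n using s1(2) by simp
    show "y l \<in> K" for l using y by auto
    show "(\<lambda>n. Y ((s1 \<circ> s2) n) l) \<longlonglongrightarrow> y l" for l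
      using tendsto_coordinate[OF lim, of l] by (simp add: o_def)
  qed
qed

lemma seq_subst_subst_pow_tendsto:
  assumes gs: "gen_subst K \<sigma>" and Y: "\<And>n l. Y n l \<in> K" and y: "\<And>l. y l \<in> K"
    and lim: "\<And>l. (\<lambda>n. Y n l) \<longlonglongrightarrow> y l"
  shows "(\<lambda>n. seq_subst (subst_pow \<sigma> k) (Y n) Q) \<longlonglongrightarrow> seq_subst (subst_pow \<sigma> k) y Q"
proof -
  define \<tau> where "\<tau> = subst_pow \<sigma> k"
  have ne_y: "\<And>l. \<tau> (y l) \<noteq> []" and ne_Y: "\<And>n l. \<tau> (Y n l) \<noteq> []"
    using subst_pow_in_Kplus[OF gs] y Y by (auto simp: \<tau>_def)
  have images: "words_tendsto (\<lambda>n. \<tau> (Y n l)) (\<tau> (y l))" for l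
    unfolding \<tau>_def by (rule subst_pow_words_tendsto[OF gs Y y lim])
  obtain m where m: "block_start \<tau> y m \<le> Q" "Q < block_start \<tau> y (m + 1)"
    using ex_block_containing[where \<tau>=\<tau> and y=y, OF ne_y] by blast
  define R where "R = nat (Q - block_start \<tau> y m)"
  have Q: "Q = block_start \<tau> y m + int R" and R: "R < length (\<tau> (y m))"
    using m by (auto simp: R_def block_start_succ)
  \<comment> \<open>once the image lengths agree on \<open>[-\<bar>m\<bar>, \<bar>m\<bar>]\<close>, position \<open>Q\<close> lies in the image of coordinate \<open>m\<close>\<close>
  have "eventually (\<lambda>n. \<forall>l\<in>{- \<bar>m\<bar>..\<bar>m\<bar>}. length (\<tau> (Y n l)) = length (\<tau> (y l))) sequentially"
    using images by (intro eventually_ball_finite) (auto simp: words_tendsto_def)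
  then have "eventually (\<lambda>n. \<tau> (Y n m) ! R = seq_subst \<tau> (Y n) Q) sequentially"
  proof eventually_elim
    case (elim n)
    then have "block_start \<tau> (Y n) m = block_start \<tau> y m"
      by (intro block_start_cong) auto
    moreover have "m \<in> {- \<bar>m\<bar>..\<bar>m\<bar>}" by (simp, arith)
    then have "length (\<tau> (Y n m)) = length (\<tau> (y m))" by (rule bspec[OF elim])
    ultimately show ?case
      using seq_subst_block_start[where \<tau>=\<tau> and y="Y n", OF ne_Y, of R m] R Q by simp
  qed
  moreover have "(\<lambda>n. \<tau> (Y n m) ! R) \<longlonglongrightarrow> \<tau> (y m) ! R"
    using images[of m] R by (simp add: words_tendsto_def)
  ultimately have "(\<lambda>n. seq_subst \<tau> (Y n) Q) \<longlonglongrightarrow> \<tau> (y m) ! R"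
    by (rule Lim_transform_eventually[rotated])
  then show ?thesis
    using seq_subst_block_start[where \<tau>=\<tau> and y=y, OF ne_y R] Q by (simp add: \<tau>_def)
qed

lemma limit_in_subshift:
  assumes y: "\<And>l. y l \<in> K" and lim: "\<And>l. (\<lambda>n. Y n l) \<longlonglongrightarrow> y l"
    and fac: "\<And>N. eventually (\<lambda>n. subst_factor K \<sigma> (window (Y n) (- int N) (int N))) sequentially"
  shows "y \<in> subshift K \<sigma>"
  unfolding subshift_def
proof (intro CollectI allI)
  fix N :: nat
  obtain n0 where n0: "\<And>n. n0 \<le> n \<Longrightarrow> subst_factor K \<sigma> (window (Y n) (- int N) (int N))"
    using fac[of N] by (auto simp: eventually_sequentially)
  define ws where "ws m = window (Y (m + n0)) (- int N) (int N)" for m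
  have "\<forall>m. subst_factor K \<sigma> (ws m) \<and> length (ws m) = length (window y (- int N) (int N))"
    using n0 by (simp add: ws_def)
  moreover have "\<forall>i<length (window y (- int N) (int N)).
      (\<lambda>m. ws m ! i) \<longlonglongrightarrow> window y (- int N) (int N) ! i"
    using LIMSEQ_ignore_initial_segment[OF lim, where k=n0] by (simp add: ws_def nth_window)
  moreover have "set (window y (- int N) (int N)) \<subseteq> K" using y by (auto simp: window_def)
  ultimately show "window y (- int N) (int N) \<in> lang K \<sigma>" unfolding lang_def by blast
qed

lemma concat_of_words_shift_seq_subst:
  assumes gs: "gen_subst K \<sigma>" and y: "\<And>l. y l \<in> K"
  shows "concat_of_words K \<sigma> k ((shift ^^ i) (seq_subst (subst_pow \<sigma> k) y))"
proof -
  define \<tau> where "\<tau> = subst_pow \<sigma> k"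
  have ne: "\<And>l. \<tau> (y l) \<noteq> []" using subst_pow_in_Kplus[OF gs y] by (simp add: \<tau>_def)
  show ?thesis unfolding concat_of_words_def
  proof (intro exI conjI allI)
    show "strict_mono (\<lambda>l. block_start \<tau> y l - int i)"
      using strict_mono_block_start[where \<tau>=\<tau> and y=y, OF ne] by (simp add: strict_mono_def)
    fix l
    have "window ((shift ^^ i) (seq_subst \<tau> y)) (block_start \<tau> y l - int i)
        (block_start \<tau> y (l + 1) - int i - 1) = \<tau> (y l)"
      using window_seq_subst_block[where \<tau>=\<tau> and y=y, OF ne] by (simp add: funpow_shift window_shift)
    then show "\<exists>a\<in>K. window ((shift ^^ i) (seq_subst (subst_pow \<sigma> k) y)) (block_start \<tau> y l - int i)
        (block_start \<tau> y (l + 1) - int i - 1) = subst_pow \<sigma> k a"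
      using y by (auto simp: \<tau>_def)
  qed
qed

lemma desubstitution_sequence:
  assumes gs: "gen_subst K \<sigma>" and prim: "primitive K \<sigma>" and b: "b \<in> K"
    and z: "z \<in> subshift K \<sigma>" and M: "\<And>a. a \<in> K \<Longrightarrow> length (subst_pow \<sigma> k a) \<le> M"
  obtains Y r where "\<And>n l. Y n l \<in> K" "\<And>n. r n < M"
    "\<And>n t. - int n \<le> t \<Longrightarrow> t \<le> int n \<Longrightarrow>
      dist (z t) (seq_subst (subst_pow \<sigma> k) (Y n) (t + int (r n))) < inverse (real (Suc n))"
    "\<And>n N. (N + 1) * M \<le> n \<Longrightarrow> subst_factor K \<sigma> (window (Y n) (- int N) (int N))"
proof -
  define approx where "approx n y r \<longleftrightarrow> (\<forall>l. y l \<in> K) \<and> r < M \<and>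
      (\<forall>t. - int n \<le> t \<and> t \<le> int n \<longrightarrow>
        dist (z t) (seq_subst (subst_pow \<sigma> k) y (t + int r)) < inverse (real (Suc n))) \<and>
      (\<forall>N. (N + 1) * M \<le> n \<longrightarrow> subst_factor K \<sigma> (window y (- int N) (int N)))" for n y r
  have "\<exists>y r. approx n y r" for n
  proof -
    have "inverse (real (Suc n)) > 0" by simp
    then obtain y r where "\<And>l. y l \<in> K" "r < M"
      "\<And>t. - int n \<le> t \<Longrightarrow> t \<le> int n \<Longrightarrow>
        dist (z t) (seq_subst (subst_pow \<sigma> k) y (t + int r)) < inverse (real (Suc n))"
      "\<And>N. (N + 1) * M \<le> n \<Longrightarrow> subst_factor K \<sigma> (window y (- int N) (int N))"
      using desubstitution[OF gs prim b z M] by blast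
    then show ?thesis unfolding approx_def by blast
  qed
  then obtain Y r where "\<And>n. approx n (Y n) (r n)" by metis
  then show ?thesis by (intro that[of Y r]) (auto simp: approx_def)
qed

lemma limit_of_desubstitutions:
  fixes Y :: "nat \<Rightarrow> int \<Rightarrow> 'a::metric_space"
  assumes gs: "gen_subst K \<sigma>" and K: "compact K" and Y: "\<And>n l. Y n l \<in> K" "\<And>n. r n < M"
    and close: "\<And>n t. - int n \<le> t \<Longrightarrow> t \<le> int n \<Longrightarrow>
      dist (z t) (seq_subst (subst_pow \<sigma> k) (Y n) (t + int (r n))) < inverse (real (Suc n))"
    and fac: "\<And>n N. (N + 1) * M \<le> n \<Longrightarrow> subst_factor K \<sigma> (window (Y n) (- int N) (int N))"
  obtains i y where "\<And>l. y l \<in> K" "y \<in> subshift K \<sigma>"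
    "z = (shift ^^ i) (seq_subst (subst_pow \<sigma> k) y)"
proof -
  define X where "X y = seq_subst (subst_pow \<sigma> k) y" for y
  obtain s :: "nat \<Rightarrow> nat" and i y where s: "strict_mono s" "\<And>n. r (s n) = i" and y: "\<And>l. y l \<in> K"
    and lim: "\<And>l. (\<lambda>n. Y (s n) l) \<longlonglongrightarrow> y l"
    using subseq_constant_index_convergent[where Y=Y and r=r, OF K Y] by blast
  have "z t = X y (t + int i)" for t
  proof (rule LIMSEQ_unique)
    have "eventually (\<lambda>n. dist (X (Y (s n)) (t + int i)) (z t) \<le> inverse (real (Suc n))) sequentially"
      using eventually_ge_at_top[of "nat \<bar>t\<bar>"]
    proof eventually_elim
      case (elim n)
      have "dist (z t) (X (Y (s n)) (t + int (r (s n)))) < inverse (real (Suc (s n)))"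
        unfolding X_def using elim seq_suble[OF s(1), of n] by (intro close) auto
      also have "\<dots> \<le> inverse (real (Suc n))"
        using seq_suble[OF s(1), of n] by (intro le_imp_inverse_le) auto
      finally show ?case using s(2) by (simp add: dist_commute)
    qed
    then show "(\<lambda>n. X (Y (s n)) (t + int i)) \<longlonglongrightarrow> z t" by (rule LIMSEQ_dist_le_inverse_Suc)
    show "(\<lambda>n. X (Y (s n)) (t + int i)) \<longlonglongrightarrow> X y (t + int i)"
      unfolding X_def using Y(1) y lim by (rule seq_subst_subst_pow_tendsto[OF gs])
  qed
  then have "z = (shift ^^ i) (X y)" by (simp add: funpow_shift fun_eq_iff)
  moreover have "y \<in> subshift K \<sigma>"
  proof (rule limit_in_subshift[OF y lim])
    show "eventually (\<lambda>n. subst_factor K \<sigma> (window (Y (s n)) (- int N) (int N))) sequentially" for N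
      using eventually_ge_at_top[of "(N + 1) * M"]
      by eventually_elim (meson fac order_trans seq_suble[OF s(1)])
  qed
  ultimately show ?thesis using y that unfolding X_def by blast
qed

theorem mainTheorem19:
  fixes K :: "'a::metric_space set" and \<sigma> :: "'a \<Rightarrow> 'a list" and z :: "int \<Rightarrow> 'a" and k :: nat
  assumes "alphabet_space K" and "gen_subst K \<sigma>" and "primitive K \<sigma>"
    and "z \<in> subshift K \<sigma>"
  shows "concat_of_words K \<sigma> k z \<and>
         (\<exists>i::nat. \<exists>y\<in>subshift K \<sigma>. z = (shift ^^ i) (seq_subst (subst_pow \<sigma> k) y))"
proof -
  have K: "compact K" using assms(1) by (simp add: alphabet_space_def)
  obtain b where b: "b \<in> K" using assms(1) unfolding alphabet_space_def by blast
  obtain M where M: "\<And>a. a \<in> K \<Longrightarrow> length (subst_pow \<sigma> k a) \<le> M"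
    using subst_pow_length_bounded[OF assms(2) K] by blast
  obtain Y r where Y: "\<And>n l. Y n l \<in> K" "\<And>n. r n < M"
    and close: "\<And>n t. - int n \<le> t \<Longrightarrow> t \<le> int n \<Longrightarrow>
      dist (z t) (seq_subst (subst_pow \<sigma> k) (Y n) (t + int (r n))) < inverse (real (Suc n))"
    and fac: "\<And>n N. (N + 1) * M \<le> n \<Longrightarrow> subst_factor K \<sigma> (window (Y n) (- int N) (int N))"
    using desubstitution_sequence[OF assms(2,3) b assms(4) M] by blast
  obtain i y where "\<And>l. y l \<in> K" "y \<in> subshift K \<sigma>"
    "z = (shift ^^ i) (seq_subst (subst_pow \<sigma> k) y)"
    using limit_of_desubstitutions[where Y=Y and r=r and z=z, OF assms(2) K Y close fac] by blast
  then show ?thesis using concat_of_words_shift_seq_subst[OF assms(2)] by blast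
qed

end
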